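(* There exists a PBD$(v,\{3,5\})$ of dimension three for $v = 89$ and $v = 95$.
   Context: For a positive integer $v$ and $K \subseteq \{2,3,4,\dots\}$, a pairwise balanced design PBD$(v,K)$ is a pair $(X,\mathcal{B})$ where $X$ is a $v$-set of points and $\mathcal{B}$ is a family of subsets of $X$ (blocks), each of size in $K$, such that any two distinct points of $X$ lie together in exactly one block. A flat (subdesign) is a pair $(Y,\mathcal{B}_Y)$ with $Y \subseteq X$ and $\mathcal{B}_Y = \{B \in \mathcal{B} : B \subseteq Y\}$ such that any two distinct points of $Y$ lie together in exactly one block of $\mathcal{B}_Y$; it is proper if $Y \ne X$. The dimension of the PBD is the maximum integer $d$ such that every set of $d$ points is contained in a proper flat. *)

theory Defs
  imports Main
begin

definition PBD :: "'a set \<Rightarrow> 'a set set \<Rightarrow> nat \<Rightarrow> nat set \<Rightarrow> bool" where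
  "PBD X \<B> v K \<longleftrightarrow> finite X \<and> card X = v \<and>
     (\<forall>B\<in>\<B>. B \<subseteq> X \<and> card B \<in> K) \<and>
     (\<forall>x\<in>X. \<forall>y\<in>X. x \<noteq> y \<longrightarrow> (\<exists>!B. B \<in> \<B> \<and> x \<in> B \<and> y \<in> B))"

definition blocks_in :: "'a set set \<Rightarrow> 'a set \<Rightarrow> 'a set set" where
  "blocks_in \<B> Y = {B \<in> \<B>. B \<subseteq> Y}"

definition is_flat :: "'a set \<Rightarrow> 'a set set \<Rightarrow> 'a set \<Rightarrow> bool" where
  "is_flat X \<B> Y \<longleftrightarrow> Y \<subseteq> X \<and>
     (\<forall>x\<in>Y. \<forall>y\<in>Y. x \<noteq> y \<longrightarrow> (\<exists>!B. B \<in> blocks_in \<B> Y \<and> x \<in> B \<and> y \<in> B))"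

definition is_proper_flat :: "'a set \<Rightarrow> 'a set set \<Rightarrow> 'a set \<Rightarrow> bool" where
  "is_proper_flat X \<B> Y \<longleftrightarrow> is_flat X \<B> Y \<and> Y \<noteq> X"

definition sets_in_proper_flats :: "'a set \<Rightarrow> 'a set set \<Rightarrow> nat \<Rightarrow> bool" where
  "sets_in_proper_flats X \<B> d \<longleftrightarrow>
     (\<forall>S. S \<subseteq> X \<and> card S = d \<longrightarrow> (\<exists>Y. is_proper_flat X \<B> Y \<and> S \<subseteq> Y))"

text \<open>The dimension: the maximum d such that every d-set of points lies in a proper flat
  (d ranges over sizes of actual point sets, d \<le> |X|, so vacuous large d are excluded).\<close>
definition pbd_dimension :: "'a set \<Rightarrow> 'a set set \<Rightarrow> nat" where
  "pbd_dimension X \<B> = (GREATEST d. d \<le> card X \<and> sets_in_proper_flats X \<B> d)"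

end

theory Submission
  imports Defs "HOL-Library.Countable"
begin

text \<open>
  Both designs are inflations of a binary projective space. Each point \<open>i\<close> of PG(n-1, 2),
  a nonzero vector of GF(2)^n, is blown up into a group Z_3 x GF(2)^m; each line
  \<open>{i, j, i + j}\<close> becomes the transversal triples \<open>{(i, a), (j, b), (i + j, c)}\<close> with
  \<open>a + b + c = 0\<close>; and each group together with five extra points is filled with a
  PBD(5 + 3 * 2^m, {3, 5}) having the extra points as a block. The pairs (n, m) = (3, 2) and
  (4, 1) give 89 and 95 points.

  Every subspace H of the projective space yields the flat formed by the extra points and the
  groups over H. Three points lie in the flat over the span of their group indices, which is
  proper unless n = 3 and the indices are independent; then they lie in the flat of all points
  \<open>(i, t, \<phi> i)\<close>, where \<open>\<phi>\<close> is the linear map taking the three indices to the GF(2)^m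
  parts of the three points. That the dimension is not four is witnessed by four points
  together with a sequence of lines through already reached points that covers the design.
\<close>

section \<open>Flats, dimension and transport\<close>

definition block_closed :: "'a set set \<Rightarrow> 'a set \<Rightarrow> bool" where
  "block_closed \<B> Y \<longleftrightarrow> (\<forall>B\<in>\<B>. \<forall>x\<in>B. \<forall>y\<in>B. x \<noteq> y \<longrightarrow> x \<in> Y \<longrightarrow> y \<in> Y \<longrightarrow> B \<subseteq> Y)"

lemma block_closedD:
  "block_closed \<B> Y \<Longrightarrow> B \<in> \<B> \<Longrightarrow> x \<in> B \<Longrightarrow> y \<in> B \<Longrightarrow> x \<noteq> y \<Longrightarrow> x \<in> Y \<Longrightarrow> y \<in> Y \<Longrightarrow> B \<subseteq> Y"
  unfolding block_closed_def by blast

lemma PBDI: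
  assumes "finite X" "card X = v" "\<And>B. B \<in> \<B> \<Longrightarrow> B \<subseteq> X \<and> card B \<in> K"
    and exists: "\<And>x y. x \<in> X \<Longrightarrow> y \<in> X \<Longrightarrow> x \<noteq> y \<Longrightarrow> \<exists>B\<in>\<B>. x \<in> B \<and> y \<in> B"
    and unique: "\<And>B B' x y. B \<in> \<B> \<Longrightarrow> B' \<in> \<B> \<Longrightarrow> x \<noteq> y \<Longrightarrow> x \<in> B \<Longrightarrow> y \<in> B \<Longrightarrow>
      x \<in> B' \<Longrightarrow> y \<in> B' \<Longrightarrow> B = B'"
  shows "PBD X \<B> v K"
  unfolding PBD_def
proof (intro conjI ballI impI)
  fix x y assume xy: "x \<in> X" "y \<in> X" "x \<noteq> y"
  obtain B where "B \<in> \<B>" "x \<in> B" "y \<in> B" using exists[OF xy] by blast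
  then show "\<exists>!B. B \<in> \<B> \<and> x \<in> B \<and> y \<in> B"
    using unique[OF _ _ xy(3)] by (intro ex1I[of _ B]) blast+
qed (use assms(1-3) in blast)+

lemma PBD_points: "PBD X \<B> v K \<Longrightarrow> finite X \<and> card X = v"
  by (simp add: PBD_def)

lemma PBD_block: "PBD X \<B> v K \<Longrightarrow> B \<in> \<B> \<Longrightarrow> B \<subseteq> X \<and> card B \<in> K"
  by (simp add: PBD_def)

lemma PBD_ex1_block:
  "PBD X \<B> v K \<Longrightarrow> x \<in> X \<Longrightarrow> y \<in> X \<Longrightarrow> x \<noteq> y \<Longrightarrow> \<exists>!B. B \<in> \<B> \<and> x \<in> B \<and> y \<in> B"
  by (simp add: PBD_def)

lemma PBD_block_exists:
  "PBD X \<B> v K \<Longrightarrow> x \<in> X \<Longrightarrow> y \<in> X \<Longrightarrow> x \<noteq> y \<Longrightarrow> \<exists>B\<in>\<B>. x \<in> B \<and> y \<in> B"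
  by (drule (3) PBD_ex1_block) (simp add: Bex_def ex1_implies_ex)

lemma PBD_blocks_eq:
  assumes "PBD X \<B> v K" "B \<in> \<B>" "B' \<in> \<B>" "x \<noteq> y" "x \<in> B" "y \<in> B" "x \<in> B'" "y \<in> B'"
  shows "B = B'"
proof -
  have "x \<in> X" "y \<in> X" using PBD_block[OF assms(1,2)] assms(5,6) by auto
  then have "\<exists>!B. B \<in> \<B> \<and> x \<in> B \<and> y \<in> B" using PBD_ex1_block[OF assms(1) _ _ assms(4)] by simp
  then show ?thesis using assms(2-8) by (metis (mono_tags, lifting))
qed

lemma PBD_is_flat_iff:
  assumes "PBD X \<B> v K"
  shows "is_flat X \<B> Y \<longleftrightarrow> Y \<subseteq> X \<and> block_closed \<B> Y"
proof
  assume flat: "is_flat X \<B> Y"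
  have "B \<subseteq> Y" if B: "B \<in> \<B>" "x \<in> B" "y \<in> B" "x \<noteq> y" "x \<in> Y" "y \<in> Y" for B x y
  proof -
    have "\<exists>!B'. B' \<in> blocks_in \<B> Y \<and> x \<in> B' \<and> y \<in> B'"
      using flat B by (simp add: is_flat_def)
    then obtain B' where "B' \<in> \<B>" "B' \<subseteq> Y" "x \<in> B'" "y \<in> B'"
      unfolding blocks_in_def by (elim ex1E) blast
    with B show ?thesis using PBD_blocks_eq[OF assms, of B B' x y] by simp
  qed
  moreover have "Y \<subseteq> X" using flat by (simp add: is_flat_def)
  ultimately show "Y \<subseteq> X \<and> block_closed \<B> Y" unfolding block_closed_def by blast
next
  assume Y: "Y \<subseteq> X \<and> block_closed \<B> Y"
  have "\<exists>!B. B \<in> blocks_in \<B> Y \<and> x \<in> B \<and> y \<in> B" if xy: "x \<in> Y" "y \<in> Y" "x \<noteq> y" for x y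
  proof -
    have "x \<in> X" "y \<in> X" using Y xy by auto
    then obtain B where B: "B \<in> \<B>" "x \<in> B" "y \<in> B"
      using PBD_block_exists[OF assms] xy(3) by blast
    then have "B \<subseteq> Y" using Y xy by (blast dest: block_closedD)
    show ?thesis
    proof (rule ex1I[of _ B])
      show "B \<in> blocks_in \<B> Y \<and> x \<in> B \<and> y \<in> B" using B \<open>B \<subseteq> Y\<close> by (simp add: blocks_in_def)
      show "B' = B" if "B' \<in> blocks_in \<B> Y \<and> x \<in> B' \<and> y \<in> B'" for B'
        using PBD_blocks_eq[OF assms, of B' B x y] that B xy(3) by (simp add: blocks_in_def)
    qed
  qed
  then show "is_flat X \<B> Y" using Y by (simp add: is_flat_def)
qed

lemma PBD_is_proper_flat_iff:
  "PBD X \<B> v K \<Longrightarrow> is_proper_flat X \<B> Y \<longleftrightarrow> Y \<subseteq> X \<and> block_closed \<B> Y \<and> Y \<noteq> X"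
  unfolding is_proper_flat_def using PBD_is_flat_iff by blast

lemma PBD_of_block_list:
  assumes "finite X" "card X = v" and blocks: "\<forall>c\<in>set L. set c \<subseteq> X \<and> card (set c) \<in> K"
    and once: "\<forall>x\<in>X. \<forall>y\<in>X. x \<noteq> y \<longrightarrow> length (filter (\<lambda>c. x \<in> set c \<and> y \<in> set c) L) = 1"
  shows "PBD X (set ` set L) v K"
proof (rule PBDI)
  have unique_list: "\<exists>c. \<forall>c'. c' \<in> set L \<and> x \<in> set c' \<and> y \<in> set c' \<longleftrightarrow> c' = c"
    if "x \<in> X" "y \<in> X" "x \<noteq> y" for x y
  proof -
    have "length (filter (\<lambda>c. x \<in> set c \<and> y \<in> set c) L) = Suc 0" using once that by simp
    then obtain c where "filter (\<lambda>c. x \<in> set c \<and> y \<in> set c) L = [c]"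
      by (auto simp: length_Suc_conv)
    then have "set (filter (\<lambda>c. x \<in> set c \<and> y \<in> set c) L) = {c}" by simp
    then show ?thesis unfolding set_filter by blast
  qed
  show "\<exists>B\<in>set ` set L. x \<in> B \<and> y \<in> B" if "x \<in> X" "y \<in> X" "x \<noteq> y" for x y
    using unique_list[OF that] by blast
  show "B = B'" if BB: "B \<in> set ` set L" "B' \<in> set ` set L" "x \<noteq> y" "x \<in> B" "y \<in> B" "x \<in> B'" "y \<in> B'"
    for B B' x y
  proof -
    obtain c c' where "B = set c" "c \<in> set L" "B' = set c'" "c' \<in> set L"
      using BB(1,2) by blast
    moreover have "x \<in> X" "y \<in> X" using blocks calculation BB(4,5) by auto
    moreover obtain c0 where "\<And>c'. c' \<in> set L \<and> x \<in> set c' \<and> y \<in> set c' \<longleftrightarrow> c' = c0"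
      using unique_list calculation BB(3) by metis
    ultimately show ?thesis using BB(4-7) by metis
  qed
qed (use assms in auto)

lemma sets_in_proper_flats_antimono:
  assumes "finite X" "d \<le> e" "e \<le> card X" "sets_in_proper_flats X \<B> e"
  shows "sets_in_proper_flats X \<B> d"
  unfolding sets_in_proper_flats_def
proof (intro allI impI)
  fix S assume S: "S \<subseteq> X \<and> card S = d"
  then obtain T where T: "S \<subseteq> T" "T \<subseteq> X" "card T = e"
    using exists_subset_between[of S e X] assms(1-3) by auto
  then obtain Y where "is_proper_flat X \<B> Y" "T \<subseteq> Y"
    using assms(4) unfolding sets_in_proper_flats_def by blast
  with T(1) show "\<exists>Y. is_proper_flat X \<B> Y \<and> S \<subseteq> Y" by blast
qed

lemma pbd_dimension_eqI:
  assumes "finite X" "d < card X" "sets_in_proper_flats X \<B> d" "\<not> sets_in_proper_flats X \<B> (d + 1)"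
  shows "pbd_dimension X \<B> = d"
  unfolding pbd_dimension_def
proof (rule Greatest_equality)
  show "d \<le> card X \<and> sets_in_proper_flats X \<B> d" using assms(2,3) by simp
  show "e \<le> d" if e: "e \<le> card X \<and> sets_in_proper_flats X \<B> e" for e
  proof (rule ccontr)
    assume "\<not> e \<le> d"
    then have "sets_in_proper_flats X \<B> (d + 1)"
      using sets_in_proper_flats_antimono[of X "d + 1" e \<B>] assms(1) e by simp
    with assms(4) show False by contradiction
  qed
qed

lemma block_closed_image:
  assumes "inj f"
  shows "block_closed ((`) f ` \<B>) (f ` Y) \<longleftrightarrow> block_closed \<B> Y"
  using assms unfolding block_closed_def
  by (simp add: inj_image_mem_iff inj_image_subset_iff inj_eq)

lemma PBD_image:
  assumes f: "inj f" and P: "PBD X \<B> v K"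
  shows "PBD (f ` X) ((`) f ` \<B>) v K"
proof (rule PBDI)
  have inj_on: "inj_on f A" for A using f by (rule inj_on_subset) simp
  show "finite (f ` X)" "card (f ` X) = v"
    using PBD_points[OF P] card_image[OF inj_on] by simp_all
  show "B \<subseteq> f ` X \<and> card B \<in> K" if "B \<in> (`) f ` \<B>" for B
    using that PBD_block[OF P] card_image[OF inj_on] by auto
  show "\<exists>B\<in>(`) f ` \<B>. x \<in> B \<and> y \<in> B" if xy: "x \<in> f ` X" "y \<in> f ` X" "x \<noteq> y" for x y
  proof -
    obtain a b where "a \<in> X" "b \<in> X" "x = f a" "y = f b" using xy(1,2) by blast
    moreover obtain C where "C \<in> \<B>" "a \<in> C" "b \<in> C"
      using PBD_block_exists[OF P] calculation xy(3) by blast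
    ultimately show ?thesis by blast
  qed
  show "B = B'" if BB: "B \<in> (`) f ` \<B>" "B' \<in> (`) f ` \<B>" "x \<noteq> y" "x \<in> B" "y \<in> B" "x \<in> B'" "y \<in> B'"
    for B B' x y
  proof -
    obtain C C' where C: "C \<in> \<B>" "B = f ` C" "C' \<in> \<B>" "B' = f ` C'" using BB(1,2) by blast
    obtain a b where "x = f a" "y = f b" "a \<in> C" "b \<in> C" using BB(4,5) C(2) by blast
    then have "a \<noteq> b" "a \<in> C'" "b \<in> C'" using BB(3,6,7) C(4) f by (auto simp: inj_image_mem_iff)
    then have "C = C'" using PBD_blocks_eq[OF P C(1,3)] \<open>a \<in> C\<close> \<open>b \<in> C\<close> by blast
    then show ?thesis using C(2,4) by simp
  qed
qed

lemma sets_in_proper_flats_image: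
  assumes f: "inj f" and P: "PBD X \<B> v K"
  shows "sets_in_proper_flats (f ` X) ((`) f ` \<B>) d \<longleftrightarrow> sets_in_proper_flats X \<B> d"
proof -
  note proper_iff = PBD_is_proper_flat_iff[OF P] PBD_is_proper_flat_iff[OF PBD_image[OF f P]]
  have flats: "is_proper_flat (f ` X) ((`) f ` \<B>) Y' \<longleftrightarrow> (\<exists>Y. Y' = f ` Y \<and> is_proper_flat X \<B> Y)" for Y'
    unfolding proper_iff
    by (auto simp: subset_image_iff block_closed_image[OF f] inj_image_subset_iff[OF f]
        inj_image_eq_iff[OF f])
  moreover have card: "card (f ` S) = card S" for S using f by (simp add: card_image inj_on_subset)
  ultimately show ?thesis
  proof (intro iffI)
    assume img: "sets_in_proper_flats (f ` X) ((`) f ` \<B>) d"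
    show "sets_in_proper_flats X \<B> d" unfolding sets_in_proper_flats_def
    proof (intro allI impI)
      fix S assume S: "S \<subseteq> X \<and> card S = d"
      then obtain Y' where "is_proper_flat (f ` X) ((`) f ` \<B>) Y'" "f ` S \<subseteq> Y'"
        using img card unfolding sets_in_proper_flats_def by (meson image_mono)
      then show "\<exists>Y. is_proper_flat X \<B> Y \<and> S \<subseteq> Y"
        using flats f by (auto simp: inj_image_subset_iff)
    qed
  next
    assume sets: "sets_in_proper_flats X \<B> d"
    show "sets_in_proper_flats (f ` X) ((`) f ` \<B>) d" unfolding sets_in_proper_flats_def
    proof (intro allI impI)
      fix S' assume "S' \<subseteq> f ` X \<and> card S' = d"
      then obtain S where "S \<subseteq> X" "S' = f ` S" "card S = d" by (auto simp: subset_image_iff card)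
      then obtain Y where "is_proper_flat X \<B> Y" "S \<subseteq> Y"
        using sets unfolding sets_in_proper_flats_def by blast
      then show "\<exists>Y'. is_proper_flat (f ` X) ((`) f ` \<B>) Y' \<and> S' \<subseteq> Y'"
        using flats \<open>S' = f ` S\<close> by blast
    qed
  qed
qed

lemma pbd_dimension_image:
  assumes "inj f" "PBD X \<B> v K"
  shows "pbd_dimension (f ` X) ((`) f ` \<B>) = pbd_dimension X \<B>"
  using assms sets_in_proper_flats_image[OF assms] card_image[of f X]
  unfolding pbd_dimension_def by (simp add: inj_on_subset)

lemma ex_nat_PBD:
  fixes X :: "'a::countable set"
  assumes "PBD X \<B> v K"
  shows "\<exists>(X' :: nat set) \<B>'. PBD X' \<B>' v K \<and> pbd_dimension X' \<B>' = pbd_dimension X \<B>"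
  using PBD_image[OF inj_to_nat assms] pbd_dimension_image[OF inj_to_nat assms] by (intro exI conjI)

fun span_along :: "('a \<Rightarrow> 'a \<Rightarrow> 'a list) \<Rightarrow> 'a list \<Rightarrow> ('a \<times> 'a) list \<Rightarrow> 'a list" where
  "span_along join S [] = S"
| "span_along join S ((x, y) # ps) =
     span_along join (if x \<in> set S \<and> y \<in> set S \<and> x \<noteq> y then join x y @ S else S) ps"

lemma span_along_subset:
  assumes "block_closed \<B> Y" "set S \<subseteq> Y"
    and join: "\<And>x y. x \<in> Y \<Longrightarrow> y \<in> Y \<Longrightarrow> x \<noteq> y \<Longrightarrow>
      set (join x y) \<in> \<B> \<and> x \<in> set (join x y) \<and> y \<in> set (join x y)"
  shows "set (span_along join S ps) \<subseteq> Y"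
  using assms(2)
proof (induction ps arbitrary: S)
  case (Cons p ps)
  obtain x y where p: "p = (x, y)" by fastforce
  have "set (join x y) \<subseteq> Y" if "x \<in> Y" "y \<in> Y" "x \<noteq> y"
    using block_closedD[OF assms(1)] join[OF that] that by blast
  then have "set (if x \<in> set S \<and> y \<in> set S \<and> x \<noteq> y then join x y @ S else S) \<subseteq> Y"
    using Cons.prems by auto
  then show ?case using Cons.IH p by simp
qed simp

lemma not_sets_in_proper_flats_by_span:
  assumes P: "PBD X \<B> v K" and S: "set S \<subseteq> X" "card (set S) = d"
    and join: "\<And>x y. x \<in> X \<Longrightarrow> y \<in> X \<Longrightarrow> x \<noteq> y \<Longrightarrow>
      set (join x y) \<in> \<B> \<and> x \<in> set (join x y) \<and> y \<in> set (join x y)"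
    and spans: "X \<subseteq> set (span_along join S ps)"
  shows "\<not> sets_in_proper_flats X \<B> d"
proof
  assume "sets_in_proper_flats X \<B> d"
  then obtain Y where Y: "is_proper_flat X \<B> Y" "set S \<subseteq> Y"
    using S unfolding sets_in_proper_flats_def by blast
  then have "Y \<subseteq> X" "block_closed \<B> Y" "Y \<noteq> X" using PBD_is_proper_flat_iff[OF P] by auto
  moreover have "set (span_along join S ps) \<subseteq> Y"
    using span_along_subset[of \<B> Y S join ps] calculation Y(2) join by blast
  ultimately show False using spans by blast
qed

section \<open>Binary vectors as natural numbers\<close>

lemma xor_less_power2: "(a::nat) < 2 ^ n \<Longrightarrow> b < 2 ^ n \<Longrightarrow> xor a b < 2 ^ n"
  by (metis take_bit_nat_eq_self_iff take_bit_xor)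

lemma xor_eq_self_iff [simp]:
  fixes a b :: nat
  shows "xor a b = a \<longleftrightarrow> b = 0" "a = xor a b \<longleftrightarrow> b = 0"
    and "xor a b = b \<longleftrightarrow> a = 0" "b = xor a b \<longleftrightarrow> a = 0"
  by (metis xor.assoc xor.commute xor.right_neutral xor_self_eq)+

lemma xor_cancel_left [simp]: "xor (a::nat) (xor a b) = b"
  by (simp flip: xor.assoc)

lemma xor_eq_0_iff [simp]: "xor (a::nat) b = 0 \<longleftrightarrow> a = b"
  by (metis xor.assoc xor.right_neutral xor_self_eq)

fun xor_comb :: "nat \<times> nat \<times> nat \<Rightarrow> bool \<times> bool \<times> bool \<Rightarrow> nat" where
  "xor_comb (i, j, k) (a, b, c) =
     xor (if a then i else 0) (xor (if b then j else 0) (if c then k else 0))"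

fun add_bool3 :: "bool \<times> bool \<times> bool \<Rightarrow> bool \<times> bool \<times> bool \<Rightarrow> bool \<times> bool \<times> bool" where
  "add_bool3 (a, b, c) (a', b', c') = (a \<noteq> a', b \<noteq> b', c \<noteq> c')"

lemma xor_comb_add: "xor_comb v (add_bool3 \<alpha> \<beta>) = xor (xor_comb v \<alpha>) (xor_comb v \<beta>)"
  by (cases v; cases \<alpha>; cases \<beta>) (auto simp: xor.assoc xor.commute xor.left_commute)

lemma add_bool3_eq_0_iff: "add_bool3 \<alpha> \<beta> = (False, False, False) \<longleftrightarrow> \<alpha> = \<beta>"
  by (cases \<alpha>; cases \<beta>) auto

lemma xor_comb_less:
  assumes "i < 2 ^ n" "j < 2 ^ n" "k < 2 ^ n"
  shows "xor_comb (i, j, k) \<alpha> < 2 ^ n"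
  using assms by (cases \<alpha>) (simp add: xor_less_power2)

lemma xor_comb_not_inj:
  assumes "i = j \<or> i = k \<or> j = k"
  shows "\<not> inj (xor_comb (i, j, k))"
proof -
  obtain \<alpha> where "\<alpha> \<noteq> (False, False, False)" "xor_comb (i, j, k) \<alpha> = 0"
    using assms by (elim disjE) (fastforce intro: that[of "(True, True, False)"] that[of "(True, False, True)"]
        that[of "(False, True, True)"])+
  moreover have "xor_comb (i, j, k) (False, False, False) = 0" by simp
  ultimately show ?thesis unfolding inj_def by metis
qed

definition xor_span :: "nat \<times> nat \<times> nat \<Rightarrow> nat set" where
  "xor_span v = range (xor_comb v) - {0}"

lemma xor_span_closed:
  assumes "a \<in> xor_span v" "b \<in> xor_span v" "a \<noteq> b"
  shows "xor a b \<in> xor_span v"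
proof -
  obtain \<alpha> \<beta> where "a = xor_comb v \<alpha>" "b = xor_comb v \<beta>" using assms(1,2) by (auto simp: xor_span_def)
  then have "xor a b \<in> range (xor_comb v)" by (metis rangeI xor_comb_add)
  moreover have "xor a b \<noteq> 0" using assms(3) by simp
  ultimately show ?thesis by (simp add: xor_span_def)
qed

lemma xor_span_generators:
  "i \<noteq> 0 \<Longrightarrow> j \<noteq> 0 \<Longrightarrow> k \<noteq> 0 \<Longrightarrow> {i, j, k} \<subseteq> xor_span (i, j, k)"
  unfolding xor_span_def
  by (auto intro: range_eqI[of _ _ "(True, False, False)"] range_eqI[of _ _ "(False, True, False)"]
      range_eqI[of _ _ "(False, False, True)"])

lemma card_xor_span: "card (xor_span v) + 1 = card (range (xor_comb v))"
proof -
  have "0 \<in> range (xor_comb v)" by (cases v) (auto intro: range_eqI[of _ _ "(False, False, False)"])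
  moreover have "range (xor_comb v) \<noteq> {}" by simp
  ultimately show ?thesis unfolding xor_span_def by (simp add: card_Diff_singleton card_gt_0_iff)
qed

lemma card_range_xor_comb: "card (range (xor_comb v)) \<le> 8"
  using card_image_le[of UNIV "xor_comb v"] by (simp flip: UNIV_Times_UNIV add: card_cartesian_product)

lemma card_range_xor_comb_less: "\<not> inj (xor_comb v) \<Longrightarrow> card (range (xor_comb v)) < 8"
  using card_range_xor_comb[of v] eq_card_imp_inj_on[of UNIV "xor_comb v"]
  by (fastforce simp flip: UNIV_Times_UNIV simp: card_cartesian_product)

section \<open>The inflated design\<close>

text \<open>
  \<open>W j\<close> (j < 5) are the extra points and \<open>G i t u\<close> is the point (t, u) of the group over i.
  Vectors of GF(2)^k are the naturals below 2^k, read as bit patterns, with xor as addition.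
\<close>
datatype point = W nat | G nat nat nat

instance point :: countable
  by countable_datatype

abbreviation W_points :: "point set" where
  "W_points \<equiv> W ` {..<5}"

lemma W_points_simps [simp]: "W j \<in> W_points \<longleftrightarrow> j < 5" "G i t u \<notin> W_points"
  by auto

definition points_over :: "nat \<Rightarrow> nat set \<Rightarrow> point set" where
  "points_over m H = W_points \<union> {G i t u | i t u. i \<in> H \<and> t < 3 \<and> u < 2 ^ m}"

lemma points_over_simps [simp]:
  "W j \<in> points_over m H \<longleftrightarrow> j < 5"
  "G i t u \<in> points_over m H \<longleftrightarrow> i \<in> H \<and> t < 3 \<and> u < 2 ^ m"
  by (auto simp: points_over_def)

lemma points_over_mono: "H \<subseteq> H' \<Longrightarrow> points_over m H \<subseteq> points_over m H'"
  unfolding points_over_def by blast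

lemma points_over_eq_image:
  "points_over m H = W_points \<union> (\<lambda>(i, t, u). G i t u) ` (H \<times> {..<3} \<times> {..<2 ^ m})"
  unfolding points_over_def by (auto simp: image_iff)

lemma finite_points_over: "finite H \<Longrightarrow> finite (points_over m H)"
  unfolding points_over_eq_image by simp

lemma card_points_over:
  assumes "finite H"
  shows "card (points_over m H) = 5 + card H * (3 * 2 ^ m)"
proof -
  let ?g = "\<lambda>(i, t, u). G i t u" and ?I = "H \<times> {..<3::nat} \<times> {..<2 ^ m::nat}"
  note eq = points_over_eq_image[of m H]
  have "inj_on ?g ?I" by (auto simp: inj_on_def)
  then have "card (?g ` ?I) = card H * (3 * 2 ^ m)"
    using assms by (simp add: card_image card_cartesian_product)
  moreover have "card W_points = 5" by (simp add: card_image inj_on_def)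
  moreover have "W_points \<inter> ?g ` ?I = {}" by auto
  ultimately show ?thesis unfolding eq using assms by (simp add: card_Un_disjoint)
qed

fun lift_to :: "nat \<Rightarrow> point \<Rightarrow> point" where
  "lift_to i (W j) = W j"
| "lift_to i (G k t u) = G i t u"

text \<open>The three points of a transversal sum to zero in Z_3 x GF(2)^m, as 2(t + s) = -(t + s) mod 3.\<close>
fun third :: "point \<Rightarrow> point \<Rightarrow> point" where
  "third (G i t u) (G j s v) = G (xor i j) ((2 * (t + s)) mod 3) (xor u v)"
| "third _ _ = W 0"

lemma third_commute: "third x y = third y x"
  by (cases x; cases y) (simp_all add: xor.commute add.commute)

lemma third_third:
  assumes "t < 3" "s < 3"
  shows "third (G j s v) (third (G i t u) (G j s v)) = G i t u"
proof -
  have "t = 0 \<or> t = 1 \<or> t = 2" "s = 0 \<or> s = 1 \<or> s = 2" using assms by auto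
  then have "(2 * (s + (2 * (t + s)) mod 3)) mod 3 = t" by auto
  then show ?thesis by (simp add: xor.left_commute)
qed

definition inflated_blocks :: "nat \<Rightarrow> nat \<Rightarrow> point set set \<Rightarrow> point set set" where
  "inflated_blocks n m D = insert W_points
     ({lift_to i ` c | i c. i \<in> {1..<2 ^ n} \<and> c \<in> D \<and> c \<noteq> W_points} \<union>
      {{G i t u, G j s v, third (G i t u) (G j s v)} | i t u j s v.
         G i t u \<in> points_over m {1..<2 ^ n} \<and> G j s v \<in> points_over m {1..<2 ^ n} \<and> i \<noteq> j})"

definition fill_block :: "point list list \<Rightarrow> point \<Rightarrow> point \<Rightarrow> point list" where
  "fill_block L x y = (case find (\<lambda>c. x \<in> set c \<and> y \<in> set c) L of Some c \<Rightarrow> c | None \<Rightarrow> [])"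

fun line :: "point list list \<Rightarrow> point \<Rightarrow> point \<Rightarrow> point list" where
  "line L (W a) (W b) = map W [0..<5]"
| "line L (W a) (G j s v) = map (lift_to j) (fill_block L (W a) (G 0 s v))"
| "line L (G i t u) (W b) = map (lift_to i) (fill_block L (G 0 t u) (W b))"
| "line L (G i t u) (G j s v) =
    (if i = j then map (lift_to i) (fill_block L (G 0 t u) (G 0 s v))
     else [G i t u, G j s v, third (G i t u) (G j s v)])"

lemma W_in_lift_to_image [simp]: "W j \<in> lift_to i ` c \<longleftrightarrow> W j \<in> c"
proof
  assume "W j \<in> lift_to i ` c"
  then obtain x where "W j = lift_to i x" "x \<in> c" by (rule imageE)
  then show "W j \<in> c" by (cases x) auto
next
  assume "W j \<in> c"
  then show "W j \<in> lift_to i ` c" by (rule rev_image_eqI[of "W j"]) simp_all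
qed

lemma inj_on_lift_to: "inj_on (lift_to i) (points_over m {0})"
proof (rule inj_onI)
  fix x y assume "x \<in> points_over m {0}" "y \<in> points_over m {0}" "lift_to i x = lift_to i y"
  then show "x = y" by (cases x; cases y) auto
qed

lemma transversal_eq:
  assumes ij: "i \<noteq> j" "i \<noteq> 0" "j \<noteq> 0" and ts: "t < 3" "s < 3"
    and xy: "x \<in> {G i t u, G j s v, third (G i t u) (G j s v)}"
      "y \<in> {G i t u, G j s v, third (G i t u) (G j s v)}" "x \<noteq> y"
  shows "{G i t u, G j s v, third (G i t u) (G j s v)} = {x, y, third x y}"
    and "\<exists>a r w b r' w'. x = G a r w \<and> y = G b r' w' \<and> a \<noteq> b"
proof -
  define P Q R where "P = G i t u" and "Q = G j s v" and "R = third P Q"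
  have QR: "third Q R = P" unfolding P_def Q_def R_def using third_third[OF ts] .
  have PR: "third P R = Q"
    unfolding P_def Q_def R_def using third_third[OF ts(2,1)] third_commute by metis
  have "x \<in> {P, Q, R}" "y \<in> {P, Q, R}" using xy unfolding P_def Q_def R_def by simp_all
  then consider "x = P" "y = Q" | "x = Q" "y = P" | "x = P" "y = R" | "x = R" "y = P"
    | "x = Q" "y = R" | "x = R" "y = Q"
    using xy(3) by blast
  then have "{P, Q, R} = {x, y, third x y}"
    by cases (simp_all add: R_def[symmetric] QR PR third_commute[of R] third_commute[of Q P]
        insert_commute)
  then show "{G i t u, G j s v, third (G i t u) (G j s v)} = {x, y, third x y}"
    unfolding P_def Q_def R_def .
  show "\<exists>a r w b r' w'. x = G a r w \<and> y = G b r' w' \<and> a \<noteq> b"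
    using xy ij by auto
qed

lemma lift_to_subset_points_over:
  "c \<subseteq> points_over m {0} \<Longrightarrow> i \<in> H \<Longrightarrow> lift_to i ` c \<subseteq> points_over m H"
proof
  fix x assume "c \<subseteq> points_over m {0}" "i \<in> H" "x \<in> lift_to i ` c"
  then obtain a where "x = lift_to i a" "a \<in> points_over m {0}" by (elim imageE) blast
  then show "x \<in> points_over m H" using \<open>i \<in> H\<close> by (cases a) auto
qed

text \<open>The graph of the linear map taking v to w, on the span of v, times Z_3.\<close>
definition graph_points :: "nat \<times> nat \<times> nat \<Rightarrow> nat \<times> nat \<times> nat \<Rightarrow> point set" where
  "graph_points v w = {G (xor_comb v \<alpha>) t (xor_comb w \<alpha>) | \<alpha> t. \<alpha> \<noteq> (False, False, False) \<and> t < 3}"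

lemma graph_pointsI:
  "\<alpha> \<noteq> (False, False, False) \<Longrightarrow> t < 3 \<Longrightarrow> G (xor_comb v \<alpha>) t (xor_comb w \<alpha>) \<in> graph_points v w"
  unfolding graph_points_def by blast

fun group_index :: "nat \<Rightarrow> point \<Rightarrow> nat" where
  "group_index d (W _) = d"
| "group_index d (G i _ _) = i"

lemma group_index_in: "d \<in> {1..<2 ^ n} \<Longrightarrow> p \<in> points_over m {1..<2 ^ n} \<Longrightarrow> group_index d p \<in> {1..<2 ^ n}"
  by (cases p) auto

locale inflation =
  fixes n m :: nat and L :: "point list list"
  assumes fill_PBD: "PBD (points_over m {0}) (set ` set L) (5 + 3 * 2 ^ m) {3, 5}"
    and W_block: "W_points \<in> set ` set L"
begin

abbreviation points :: "point set" where
  "points \<equiv> points_over m {1..<2 ^ n}"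

abbreviation blocks :: "point set set" where
  "blocks \<equiv> inflated_blocks n m (set ` set L)"

lemma fill_block_subset: "c \<in> set ` set L \<Longrightarrow> c \<subseteq> points_over m {0}"
  using PBD_block[OF fill_PBD] by blast

lemma fill_block_eq:
  assumes "c \<in> set ` set L" "a \<in> c" "b \<in> c" "a \<noteq> b"
  shows "set (fill_block L a b) = c"
proof -
  have "find (\<lambda>c. a \<in> set c \<and> b \<in> set c) L \<noteq> None"
    using assms(1-3) by (auto simp: find_None_iff)
  then obtain c' where c': "find (\<lambda>c. a \<in> set c \<and> b \<in> set c) L = Some c'" by blast
  then have "c' \<in> set L" "a \<in> set c'" "b \<in> set c'"
    by (auto simp: find_Some_iff)
  then have "set c' = c" using PBD_blocks_eq[OF fill_PBD, of "set c'" c a b] assms by blast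
  then show ?thesis using c' by (simp add: fill_block_def)
qed

lemma fill_block_in:
  assumes "a \<in> points_over m {0}" "b \<in> points_over m {0}" "a \<noteq> b"
  shows "set (fill_block L a b) \<in> set ` set L \<and> a \<in> set (fill_block L a b) \<and> b \<in> set (fill_block L a b)"
proof -
  obtain c where "c \<in> set ` set L" "a \<in> c" "b \<in> c"
    using PBD_block_exists[OF fill_PBD assms] by blast
  then show ?thesis using fill_block_eq assms(3) by simp
qed

lemma fill_block_one_W:
  assumes "c \<in> set ` set L" "c \<noteq> W_points" "W a \<in> c" "W b \<in> c"
  shows "a = b"
proof (rule ccontr)
  assume "a \<noteq> b"
  moreover have "a < 5" "b < 5" using fill_block_subset[OF assms(1)] assms(3,4) by auto
  ultimately show False
    using PBD_blocks_eq[OF fill_PBD assms(1) W_block, of "W a" "W b"] assms by auto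
qed

lemma lift_to_block_in_blocks:
  "i \<in> {1..<2 ^ n} \<Longrightarrow> c \<in> set ` set L \<Longrightarrow> c \<noteq> W_points \<Longrightarrow> lift_to i ` c \<in> blocks"
  unfolding inflated_blocks_def by blast

lemma transversal_in_blocks:
  assumes "G i t u \<in> points" "G j s v \<in> points" "i \<noteq> j"
  shows "{G i t u, G j s v, third (G i t u) (G j s v)} \<in> blocks"
  unfolding inflated_blocks_def
  by (rule insertI2, rule UnI2, rule CollectI, intro exI conjI) (use assms in auto)

lemma line_lift_to:
  assumes "a \<in> points_over m {0}" "b \<in> points_over m {0}" "\<not> (a \<in> W_points \<and> b \<in> W_points)"
  shows "line L (lift_to i a) (lift_to i b) = map (lift_to i) (fill_block L a b)"
  using assms by (cases a; cases b) auto

lemma lifted_line_in_blocks: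
  assumes "i \<in> {1..<2 ^ n}" "a \<in> points_over m {0}" "b \<in> points_over m {0}" "a \<noteq> b"
    and not_W: "\<not> (a \<in> W_points \<and> b \<in> W_points)"
  defines "l \<equiv> line L (lift_to i a) (lift_to i b)"
  shows "set l \<in> blocks \<and> lift_to i a \<in> set l \<and> lift_to i b \<in> set l"
proof -
  let ?c = "set (fill_block L a b)"
  have c: "?c \<in> set ` set L" "a \<in> ?c" "b \<in> ?c" using fill_block_in assms(2-4) by blast+
  then have "?c \<noteq> W_points" using not_W by blast
  then have "lift_to i ` ?c \<in> blocks" using lift_to_block_in_blocks assms(1) c(1) by blast
  moreover have "set l = lift_to i ` ?c" unfolding l_def line_lift_to[OF assms(2,3) not_W] by simp
  ultimately show ?thesis using c(2,3) by simp
qed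

lemma line_in_blocks:
  assumes "x \<in> points" "y \<in> points" "x \<noteq> y"
  shows "set (line L x y) \<in> blocks \<and> x \<in> set (line L x y) \<and> y \<in> set (line L x y)"
proof (cases x)
  case (W a)
  show ?thesis
  proof (cases y)
    case (W b)
    then show ?thesis using \<open>x = W a\<close> assms by (simp add: inflated_blocks_def atLeast0LessThan)
  next
    case (G j s v)
    then show ?thesis
      using lifted_line_in_blocks[of j "W a" "G 0 s v"] \<open>x = W a\<close> assms by simp
  qed
next
  case (G i t u)
  show ?thesis
  proof (cases y)
    case (W b)
    then show ?thesis
      using lifted_line_in_blocks[of i "G 0 t u" "W b"] \<open>x = G i t u\<close> assms by simp
  next
    case (G j s v)
    show ?thesis
    proof (cases "i = j")
      case True
      then show ?thesis
        using lifted_line_in_blocks[of i "G 0 t u" "G 0 s v"] \<open>x = G i t u\<close> G assms by auto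
    next
      case False
      then show ?thesis
        using transversal_in_blocks[of i t u j s v] \<open>x = G i t u\<close> G assms by simp
    qed
  qed
qed

lemma inflated_blocks_cases:
  assumes "B \<in> blocks"
  obtains "B = W_points"
  | i c where "i \<in> {1..<2 ^ n}" "c \<in> set ` set L" "c \<noteq> W_points" "B = lift_to i ` c"
  | i t u j s v where "G i t u \<in> points" "G j s v \<in> points" "i \<noteq> j"
      "B = {G i t u, G j s v, third (G i t u) (G j s v)}"
proof -
  have "B = W_points \<or> (\<exists>i c. B = lift_to i ` c \<and> i \<in> {1..<2 ^ n} \<and> c \<in> set ` set L \<and> c \<noteq> W_points)
    \<or> (\<exists>i t u j s v. B = {G i t u, G j s v, third (G i t u) (G j s v)} \<and>
        G i t u \<in> points \<and> G j s v \<in> points \<and> i \<noteq> j)"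
    using assms unfolding inflated_blocks_def by (simp only: insert_iff Un_iff mem_Collect_eq)
  then show thesis by (elim disjE exE conjE) (simp_all add: that)
qed

lemma block_eq_line:
  assumes B: "B \<in> blocks" and xy: "x \<in> B" "y \<in> B" "x \<noteq> y"
  shows "B = set (line L x y)"
  using B
proof (cases rule: inflated_blocks_cases)
  case 1
  then obtain a b where "x = W a" "y = W b" using xy by blast
  then show ?thesis using 1 by (simp add: atLeast0LessThan)
next
  case (2 i c)
  have "x \<in> lift_to i ` c" "y \<in> lift_to i ` c" using xy(1,2) 2(4) by simp_all
  then obtain a b where ab: "x = lift_to i a" "y = lift_to i b" "a \<in> c" "b \<in> c"
    by (elim imageE)
  have base: "a \<in> points_over m {0}" "b \<in> points_over m {0}"
    using ab fill_block_subset[OF 2(2)] by blast+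
  have "a \<noteq> b" using ab xy(3) by blast
  moreover have "\<not> (a \<in> W_points \<and> b \<in> W_points)"
    using fill_block_one_W[OF 2(2,3)] ab calculation by blast
  ultimately show ?thesis
    using ab 2 by (simp add: line_lift_to[OF base] fill_block_eq)
next
  case (3 i t u j s v)
  have ts: "t < 3" "s < 3" and ij: "i \<noteq> 0" "j \<noteq> 0" using 3 by auto
  have xy': "x \<in> {G i t u, G j s v, third (G i t u) (G j s v)}"
    "y \<in> {G i t u, G j s v, third (G i t u) (G j s v)}" using xy(1,2) 3(4) by simp_all
  obtain a r w b r' w' where "x = G a r w" "y = G b r' w'" "a \<noteq> b"
    using transversal_eq(2)[OF 3(3) ij ts xy' xy(3)] by blast
  moreover have "B = {x, y, third x y}" using transversal_eq(1)[OF 3(3) ij ts xy' xy(3)] 3(4) by simp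
  ultimately show ?thesis by simp
qed

lemma block_subset_card:
  assumes "B \<in> blocks"
  shows "B \<subseteq> points \<and> card B \<in> {3, 5}"
  using assms
proof (cases rule: inflated_blocks_cases)
  case 1
  then show ?thesis by (auto simp: card_image inj_on_def)
next
  case (2 i c)
  have sub: "c \<subseteq> points_over m {0}" using fill_block_subset[OF 2(2)] .
  have "lift_to i ` c \<subseteq> points"
  proof
    fix x assume "x \<in> lift_to i ` c"
    then obtain a where "x = lift_to i a" "a \<in> c" by (rule imageE)
    then show "x \<in> points" using 2(1) sub by (cases a) auto
  qed
  moreover have "card (lift_to i ` c) = card c"
    using card_image[OF inj_on_subset[OF inj_on_lift_to sub]] .
  ultimately show ?thesis using 2 PBD_block[OF fill_PBD 2(2)] by simp
next
  case (3 i t u j s v)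
  then have ij: "i \<noteq> 0" "j \<noteq> 0" "xor i j \<noteq> 0" "xor i j \<noteq> i" "xor i j \<noteq> j" by simp_all
  have "xor i j < 2 ^ n" "xor u v < 2 ^ m" using 3 by (simp_all add: xor_less_power2)
  moreover have "1 \<le> xor i j" using ij(3) by linarith
  ultimately have "G (xor i j) ((2 * (t + s)) mod 3) (xor u v) \<in> points" by simp
  then have "B \<subseteq> points" using 3 by simp
  moreover have "card B = 3" using 3(3,4) ij(4,5) by simp
  ultimately show ?thesis by simp
qed

theorem PBD_inflation: "PBD points blocks (5 + (2 ^ n - 1) * (3 * 2 ^ m)) {3, 5}"
proof (rule PBDI)
  show "finite points" by (simp add: finite_points_over)
  show "card points = 5 + (2 ^ n - 1) * (3 * 2 ^ m)" by (simp add: card_points_over)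
  show "B \<subseteq> points \<and> card B \<in> {3, 5}" if "B \<in> blocks" for B
    using block_subset_card[OF that] .
  show "\<exists>B\<in>blocks. x \<in> B \<and> y \<in> B" if "x \<in> points" "y \<in> points" "x \<noteq> y" for x y
    using line_in_blocks[OF that] by blast
  show "B = B'" if "B \<in> blocks" "B' \<in> blocks" "x \<noteq> y" "x \<in> B" "y \<in> B" "x \<in> B'" "y \<in> B'"
    for B B' x y
    using block_eq_line[of B x y] block_eq_line[of B' x y] that by simp
qed

section \<open>Flats of the inflated design\<close>

lemma block_closedI_line:
  assumes "\<And>x y. x \<in> Y \<Longrightarrow> y \<in> Y \<Longrightarrow> x \<noteq> y \<Longrightarrow> set (line L x y) \<subseteq> Y"
  shows "block_closed blocks Y"
  unfolding block_closed_def
proof (intro ballI impI)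
  fix B x y assume "B \<in> blocks" "x \<in> B" "y \<in> B" "x \<noteq> y" "x \<in> Y" "y \<in> Y"
  then have "B = set (line L x y)" by (intro block_eq_line)
  then show "B \<subseteq> Y" using assms \<open>x \<in> Y\<close> \<open>y \<in> Y\<close> \<open>x \<noteq> y\<close> by simp
qed

lemma lifted_line_subset:
  assumes "i \<in> H" "a \<in> points_over m {0}" "b \<in> points_over m {0}" "a \<noteq> b"
  shows "lift_to i ` set (fill_block L a b) \<subseteq> points_over m H"
proof -
  have "set (fill_block L a b) \<subseteq> points_over m {0}"
    using fill_block_in[OF assms(2-4)] fill_block_subset by blast
  then show ?thesis using lift_to_subset_points_over assms(1) by blast
qed

lemma subspace_block_closed:
  assumes H: "\<And>a b. a \<in> H \<Longrightarrow> b \<in> H \<Longrightarrow> a \<noteq> b \<Longrightarrow> xor a b \<in> H"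
  shows "block_closed blocks (points_over m H)"
proof (rule block_closedI_line)
  fix x y assume xy: "x \<in> points_over m H" "y \<in> points_over m H" "x \<noteq> y"
  show "set (line L x y) \<subseteq> points_over m H"
  proof (cases x; cases y)
    fix a b assume "x = W a" "y = W b"
    then show ?thesis by (auto simp: atLeast0LessThan)
  next
    fix a j s v assume "x = W a" "y = G j s v"
    then show ?thesis using lifted_line_subset[of j H "W a" "G 0 s v"] xy by simp
  next
    fix i t u b assume "x = G i t u" "y = W b"
    then show ?thesis using lifted_line_subset[of i H "G 0 t u" "W b"] xy by simp
  next
    fix i t u j s v assume x: "x = G i t u" and y: "y = G j s v"
    show ?thesis
    proof (cases "i = j")
      case True
      then show ?thesis using lifted_line_subset[of i H "G 0 t u" "G 0 s v"] x y xy by auto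
    next
      case False
      then have "xor i j \<in> H" "xor u v < 2 ^ m" using H x y xy by (simp_all add: xor_less_power2)
      then show ?thesis using x y xy False by simp
    qed
  qed
qed

lemma subspace_proper_flat:
  assumes "H \<subseteq> {1..<2 ^ n}" "l \<in> {1..<2 ^ n}" "l \<notin> H"
    and "\<And>a b. a \<in> H \<Longrightarrow> b \<in> H \<Longrightarrow> a \<noteq> b \<Longrightarrow> xor a b \<in> H"
  shows "is_proper_flat points blocks (points_over m H)"
proof -
  have "G l 0 0 \<in> points" "G l 0 0 \<notin> points_over m H" using assms(2,3) by simp_all
  then show ?thesis
    using PBD_is_proper_flat_iff[OF PBD_inflation] points_over_mono[OF assms(1)]
      subspace_block_closed[OF assms(4)] by blast
qed

lemma span_proper_flat:
  assumes "i \<in> {1..<2 ^ n}" "j \<in> {1..<2 ^ n}" "k \<in> {1..<2 ^ n}"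
    and "card (xor_span (i, j, k)) < 2 ^ n - 1"
  shows "is_proper_flat points blocks (points_over m (xor_span (i, j, k)))"
proof -
  have sub: "xor_span (i, j, k) \<subseteq> {1..<2 ^ n}"
  proof
    fix a assume "a \<in> xor_span (i, j, k)"
    then obtain \<alpha> where "a = xor_comb (i, j, k) \<alpha>" "a \<noteq> 0" unfolding xor_span_def by blast
    moreover have "xor_comb (i, j, k) \<alpha> < 2 ^ n" using assms(1-3) by (simp add: xor_comb_less)
    ultimately show "a \<in> {1..<2 ^ n}" by simp
  qed
  have "\<not> {1..<2 ^ n} \<subseteq> xor_span (i, j, k)"
  proof
    assume "{1..<2 ^ n} \<subseteq> xor_span (i, j, k)"
    then have "card {1..<2 ^ n :: nat} \<le> card (xor_span (i, j, k))"
      using sub by (simp add: card_mono finite_subset)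
    with assms(4) show False by simp
  qed
  then obtain l where "l \<in> {1..<2 ^ n}" "l \<notin> xor_span (i, j, k)" by blast
  then show ?thesis using subspace_proper_flat[OF sub] xor_span_closed by blast
qed

definition vertical_blocks :: bool where
  "vertical_blocks \<longleftrightarrow> (\<forall>u < 2 ^ m. {G 0 0 u, G 0 1 u, G 0 2 u} \<in> set ` set L)"

lemma graph_block_closed:
  assumes inj: "inj (xor_comb v)" and w: "\<And>\<alpha>. xor_comb w \<alpha> < 2 ^ m"
    and vertical: vertical_blocks
  shows "block_closed blocks (graph_points v w)"
proof (rule block_closedI_line)
  fix x y assume xy: "x \<in> graph_points v w" "y \<in> graph_points v w" "x \<noteq> y"
  obtain \<alpha> t where x: "\<alpha> \<noteq> (False, False, False)" "t < 3" "x = G (xor_comb v \<alpha>) t (xor_comb w \<alpha>)"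
    using xy(1) unfolding graph_points_def by blast
  obtain \<beta> s where y: "\<beta> \<noteq> (False, False, False)" "s < 3" "y = G (xor_comb v \<beta>) s (xor_comb w \<beta>)"
    using xy(2) unfolding graph_points_def by blast
  show "set (line L x y) \<subseteq> graph_points v w"
  proof (cases "\<alpha> = \<beta>")
    case True
    define i u where "i = xor_comb v \<alpha>" and "u = xor_comb w \<alpha>"
    let ?V = "{G 0 0 u, G 0 1 u, G 0 2 u}"
    have xy': "x = G i t u" "y = G i s u" "t \<noteq> s" using x y xy(3) True by (auto simp: i_def u_def)
    have "t = 0 \<or> t = 1 \<or> t = 2" "s = 0 \<or> s = 1 \<or> s = 2" using x(2) y(2) by auto
    then have "G 0 t u \<in> ?V" "G 0 s u \<in> ?V" by auto
    moreover have "?V \<in> set ` set L" using vertical w u_def unfolding vertical_blocks_def by blast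
    ultimately have "set (fill_block L (G 0 t u) (G 0 s u)) = ?V"
      using xy'(3) by (intro fill_block_eq) simp_all
    moreover have "G i r u \<in> graph_points v w" if "r < 3" for r
      unfolding i_def u_def using graph_pointsI[OF x(1) that] .
    ultimately show ?thesis using xy' by simp
  next
    case False
    then have "xor_comb v \<alpha> \<noteq> xor_comb v \<beta>" using inj by (auto dest: injD)
    moreover have "third x y \<in> graph_points v w"
    proof -
      define \<gamma> where "\<gamma> = add_bool3 \<alpha> \<beta>"
      have "\<gamma> \<noteq> (False, False, False)" using False by (simp add: \<gamma>_def add_bool3_eq_0_iff)
      moreover have "third x y = G (xor_comb v \<gamma>) ((2 * (t + s)) mod 3) (xor_comb w \<gamma>)"
        using x(3) y(3) by (simp add: \<gamma>_def xor_comb_add)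
      ultimately show ?thesis using graph_pointsI[of \<gamma> "(2 * (t + s)) mod 3" v w] by simp
    qed
    ultimately show ?thesis using x y xy by simp
  qed
qed

lemma graph_proper_flat:
  assumes inj: "inj (xor_comb (i, j, k))" and ijk: "i < 2 ^ n" "j < 2 ^ n" "k < 2 ^ n"
    and u: "u\<^sub>1 < 2 ^ m" "u\<^sub>2 < 2 ^ m" "u\<^sub>3 < 2 ^ m" and "1 \<le> m"
    and vertical: vertical_blocks
  shows "is_proper_flat points blocks (graph_points (i, j, k) (u\<^sub>1, u\<^sub>2, u\<^sub>3))"
proof -
  let ?Y = "graph_points (i, j, k) (u\<^sub>1, u\<^sub>2, u\<^sub>3)"
  have comb0: "xor_comb (i, j, k) \<alpha> \<noteq> 0" if "\<alpha> \<noteq> (False, False, False)" for \<alpha>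
    using inj that injD[OF inj, of \<alpha> "(False, False, False)"] by auto
  have sub: "?Y \<subseteq> points"
  proof
    fix p assume "p \<in> ?Y"
    then obtain \<alpha> t where "\<alpha> \<noteq> (False, False, False)" "t < 3"
      "p = G (xor_comb (i, j, k) \<alpha>) t (xor_comb (u\<^sub>1, u\<^sub>2, u\<^sub>3) \<alpha>)"
      unfolding graph_points_def by blast
    moreover have "xor_comb (i, j, k) \<alpha> < 2 ^ n" "xor_comb (u\<^sub>1, u\<^sub>2, u\<^sub>3) \<alpha> < 2 ^ m"
      using ijk u by (simp_all add: xor_comb_less)
    ultimately show "p \<in> points" using comb0[of \<alpha>] by simp
  qed
  define u' where "u' = (if u\<^sub>1 = 0 then 1 else 0 :: nat)"
  have "1 < (2::nat) ^ m" using \<open>1 \<le> m\<close> by (intro one_less_power) auto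
  then have "u' < 2 ^ m" by (simp add: u'_def)
  moreover have "i \<noteq> 0" using comb0[of "(True, False, False)"] by simp
  ultimately have in_points: "G i 0 u' \<in> points" using ijk by simp
  have not_in_Y: "G i 0 u' \<notin> ?Y"
  proof
    assume "G i 0 u' \<in> ?Y"
    then obtain \<alpha> where \<alpha>: "i = xor_comb (i, j, k) \<alpha>" "u' = xor_comb (u\<^sub>1, u\<^sub>2, u\<^sub>3) \<alpha>"
      unfolding graph_points_def by blast
    then have "xor_comb (i, j, k) \<alpha> = xor_comb (i, j, k) (True, False, False)" by simp
    then have "\<alpha> = (True, False, False)" by (rule injD[OF inj])
    then have "u' = u\<^sub>1" using \<alpha>(2) by simp
    then show False by (cases "u\<^sub>1 = 0") (simp_all add: u'_def)
  qed
  have "block_closed blocks ?Y"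
    using graph_block_closed[OF inj _ vertical] u by (simp add: xor_comb_less)
  moreover have "?Y \<noteq> points" using in_points not_in_Y by blast
  ultimately show ?thesis unfolding PBD_is_proper_flat_iff[OF PBD_inflation] using sub by simp
qed

lemma three_points_indices:
  assumes "1 \<le> n" "x \<in> points" "y \<in> points" "z \<in> points"
  obtains i j k where "i \<in> {1..<2 ^ n}" "j \<in> {1..<2 ^ n}" "k \<in> {1..<2 ^ n}"
    "{x, y, z} \<subseteq> points_over m {i, j, k}"
    "inj (xor_comb (i, j, k)) \<Longrightarrow> \<exists>t u t' u' t'' u''. x = G i t u \<and> y = G j t' u' \<and> z = G k t'' u''"
proof -
  define d where "d = group_index (group_index (group_index 1 z) y) x"
  have "1 < (2::nat) ^ n" using assms(1) by (intro one_less_power) auto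
  then have d: "d \<in> {1..<2 ^ n}" using assms(2-4) unfolding d_def by (cases x; cases y; cases z) auto
  show thesis
  proof (rule that[of "group_index d x" "group_index d y" "group_index d z"])
    show "group_index d x \<in> {1..<2 ^ n}" "group_index d y \<in> {1..<2 ^ n}" "group_index d z \<in> {1..<2 ^ n}"
      using d assms(2-4) group_index_in by blast+
    show "{x, y, z} \<subseteq> points_over m {group_index d x, group_index d y, group_index d z}"
      using assms(2-4) by (cases x; cases y; cases z) auto
    show "\<exists>t u t' u' t'' u''. x = G (group_index d x) t u \<and> y = G (group_index d y) t' u' \<and>
        z = G (group_index d z) t'' u''"
      if "inj (xor_comb (group_index d x, group_index d y, group_index d z))"
      using xor_comb_not_inj that unfolding d_def by (cases x; cases y; cases z) auto
  qed
qed

lemma three_points_in_proper_flat: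
  assumes cond: "4 \<le> n \<or> 3 \<le> n \<and> 1 \<le> m \<and> vertical_blocks"
    and xyz: "x \<in> points" "y \<in> points" "z \<in> points"
  shows "\<exists>Y. is_proper_flat points blocks Y \<and> {x, y, z} \<subseteq> Y"
proof -
  have "3 \<le> n" using cond by auto
  then have n8: "(2::nat) ^ 3 \<le> 2 ^ n" by (intro power_increasing) auto
  obtain i j k where ijk: "i \<in> {1..<2 ^ n}" "j \<in> {1..<2 ^ n}" "k \<in> {1..<2 ^ n}"
    and cover: "{x, y, z} \<subseteq> points_over m {i, j, k}"
    and all_G: "inj (xor_comb (i, j, k)) \<Longrightarrow>
      \<exists>t u t' u' t'' u''. x = G i t u \<and> y = G j t' u' \<and> z = G k t'' u''"
    using \<open>3 \<le> n\<close> by (rule_tac three_points_indices[OF _ xyz]) simp_all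
  show ?thesis
  proof (cases "inj (xor_comb (i, j, k)) \<and> \<not> 4 \<le> n")
    case True
    then have vertical: "1 \<le> m" vertical_blocks using cond by auto
    obtain t u t' u' t'' u'' where G: "x = G i t u" "y = G j t' u'" "z = G k t'' u''"
      using all_G True by blast
    let ?Y = "graph_points (i, j, k) (u, u', u'')"
    have "is_proper_flat points blocks ?Y"
      using graph_proper_flat[of i j k u u' u''] True ijk xyz G vertical by simp
    moreover have "t < 3" "t' < 3" "t'' < 3" using xyz G by simp_all
    then have "G i t u \<in> ?Y" "G j t' u' \<in> ?Y" "G k t'' u'' \<in> ?Y"
      using graph_pointsI[of "(True, False, False)" t "(i, j, k)" "(u, u', u'')"]
        graph_pointsI[of "(False, True, False)" t' "(i, j, k)" "(u, u', u'')"]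
        graph_pointsI[of "(False, False, True)" t'' "(i, j, k)" "(u, u', u'')"] by simp_all
    ultimately show ?thesis using G by blast
  next
    case False
    have "card (xor_span (i, j, k)) < 2 ^ n - 1"
    proof (cases "4 \<le> n")
      case True
      then have "(2::nat) ^ 4 \<le> 2 ^ n" by (intro power_increasing) auto
      then show ?thesis using card_xor_span[of "(i, j, k)"] card_range_xor_comb[of "(i, j, k)"] by simp
    next
      case False
      then show ?thesis using \<open>\<not> (inj _ \<and> _)\<close> card_xor_span[of "(i, j, k)"]
          card_range_xor_comb_less[of "(i, j, k)"] n8 by simp
    qed
    then have "is_proper_flat points blocks (points_over m (xor_span (i, j, k)))"
      using span_proper_flat ijk by blast
    moreover have "{i, j, k} \<subseteq> xor_span (i, j, k)" using ijk by (intro xor_span_generators) auto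
    ultimately show ?thesis using cover points_over_mono by blast
  qed
qed

lemma sets_in_proper_flats_3:
  assumes "4 \<le> n \<or> 3 \<le> n \<and> 1 \<le> m \<and> vertical_blocks"
  shows "sets_in_proper_flats points blocks 3"
  unfolding sets_in_proper_flats_def
proof (intro allI impI)
  fix S assume "S \<subseteq> points \<and> card S = 3"
  moreover obtain x y z where "S = {x, y, z}" using calculation by (auto simp: card_3_iff)
  ultimately have "S = {x, y, z}" "x \<in> points" "y \<in> points" "z \<in> points" by auto
  then show "\<exists>Y. is_proper_flat points blocks Y \<and> S \<subseteq> Y"
    using three_points_in_proper_flat[OF assms] by blast
qed

theorem pbd_dimension_inflation:
  assumes "4 \<le> n \<or> 3 \<le> n \<and> 1 \<le> m \<and> vertical_blocks"
    and S: "set S \<subseteq> points" "card (set S) = 4"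
    and spans: "points \<subseteq> set (span_along (line L) S ps)"
  shows "pbd_dimension points blocks = 3"
proof (rule pbd_dimension_eqI)
  show fin: "finite points" by (simp add: finite_points_over)
  show "3 < card points" using card_mono[OF fin S(1)] S(2) by simp
  show "sets_in_proper_flats points blocks 3" using sets_in_proper_flats_3[OF assms(1)] .
  show "\<not> sets_in_proper_flats points blocks (3 + 1)"
    using not_sets_in_proper_flats_by_span[OF PBD_inflation S line_in_blocks spans] by simp
qed

end

section \<open>The designs on 89 and 95 points\<close>

lemma points_over_set:
  "points_over m (set is) = set (map W [0..<5] @ [G i t u. i \<leftarrow> is, t \<leftarrow> [0..<3], u \<leftarrow> [0..<2 ^ m]])"
proof (rule set_eqI)
  fix x show "x \<in> points_over m (set is) \<longleftrightarrow>
      x \<in> set (map W [0..<5] @ [G i t u. i \<leftarrow> is, t \<leftarrow> [0..<3], u \<leftarrow> [0..<2 ^ m]])"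
    by (cases x) (auto simp: image_iff)
qed

lemma W_points_eq: "W_points = {W 0, W 1, W 2, W 3, W 4}"
proof -
  have "{..<5::nat} = {0, 1, 2, 3, 4}" by auto
  then show ?thesis by simp
qed

lemma base_points_set:
  "points_over m {0} = set (map W [0..<5] @ [G 0 t u. t \<leftarrow> [0..<3], u \<leftarrow> [0..<2 ^ m]])"
  using points_over_set[of m "[0]"] by simp

definition pbd17 :: "point list list" where
  "pbd17 = [
    [W 0, W 1, W 2, W 3, W 4], [G 0 0 0, G 0 1 0, G 0 2 0], [G 0 0 1, G 0 1 1, G 0 2 1],
    [G 0 0 2, G 0 1 2, G 0 2 2], [G 0 0 3, G 0 1 3, G 0 2 3], [G 0 2 0, G 0 0 2, G 0 0 3],
    [G 0 0 0, G 0 1 1, G 0 2 3], [G 0 0 0, G 0 0 1, G 0 2 2], [G 0 2 1, G 0 1 2, G 0 1 3],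
    [G 0 2 0, G 0 0 1, G 0 2 3], [G 0 1 0, G 0 1 2, G 0 0 3], [G 0 1 0, G 0 2 1, G 0 0 2],
    [G 0 1 1, G 0 2 2, G 0 1 3], [W 0, G 0 0 0, G 0 1 2], [W 0, G 0 0 1, G 0 0 2],
    [W 0, G 0 0 3, G 0 2 1], [W 0, G 0 1 0, G 0 1 1], [W 0, G 0 1 3, G 0 2 0],
    [W 0, G 0 2 2, G 0 2 3], [W 1, G 0 0 0, G 0 0 2], [W 1, G 0 0 1, G 0 1 2],
    [W 1, G 0 0 3, G 0 1 1], [W 1, G 0 1 0, G 0 1 3], [W 1, G 0 2 0, G 0 2 2],
    [W 1, G 0 2 1, G 0 2 3], [W 2, G 0 0 0, G 0 2 1], [W 2, G 0 0 1, G 0 1 0],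
    [W 2, G 0 0 2, G 0 1 3], [W 2, G 0 0 3, G 0 2 2], [W 2, G 0 1 1, G 0 2 0],
    [W 2, G 0 1 2, G 0 2 3], [W 3, G 0 0 0, G 0 0 3], [W 3, G 0 0 1, G 0 1 3],
    [W 3, G 0 0 2, G 0 1 1], [W 3, G 0 1 0, G 0 2 3], [W 3, G 0 1 2, G 0 2 0],
    [W 3, G 0 2 1, G 0 2 2], [W 4, G 0 0 0, G 0 1 3], [W 4, G 0 0 1, G 0 0 3],
    [W 4, G 0 0 2, G 0 2 3], [W 4, G 0 1 0, G 0 2 2], [W 4, G 0 1 1, G 0 1 2],
    [W 4, G 0 2 0, G 0 2 1]]"

definition pbd11 :: "point list list" where
  "pbd11 = [
    [W 0, W 1, W 2, W 3, W 4], [W 0, G 0 0 0, G 0 2 1], [W 0, G 0 1 0, G 0 1 1],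
    [W 0, G 0 2 0, G 0 0 1], [W 1, G 0 1 0, G 0 2 1], [W 1, G 0 2 0, G 0 0 0],
    [W 1, G 0 0 1, G 0 1 1], [W 2, G 0 2 0, G 0 2 1], [W 2, G 0 0 1, G 0 1 0],
    [W 2, G 0 1 1, G 0 0 0], [W 3, G 0 0 1, G 0 2 1], [W 3, G 0 1 1, G 0 2 0],
    [W 3, G 0 0 0, G 0 1 0], [W 4, G 0 1 1, G 0 2 1], [W 4, G 0 0 0, G 0 0 1],
    [W 4, G 0 1 0, G 0 2 0]]"

lemma pbd17_PBD: "PBD (points_over 2 {0}) (set ` set pbd17) 17 {3, 5}"
proof (rule PBD_of_block_list)
  show "finite (points_over 2 {0})" "card (points_over 2 {0}) = 17"
    by (simp_all add: finite_points_over card_points_over)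
  show "\<forall>c\<in>set pbd17. set c \<subseteq> points_over 2 {0} \<and> card (set c) \<in> {3, 5}"
    by (simp add: pbd17_def)
  show "\<forall>x\<in>points_over 2 {0}. \<forall>y\<in>points_over 2 {0}. x \<noteq> y \<longrightarrow>
      length (filter (\<lambda>c. x \<in> set c \<and> y \<in> set c) pbd17) = 1"
    unfolding base_points_set by code_simp
qed

lemma pbd11_PBD: "PBD (points_over 1 {0}) (set ` set pbd11) 11 {3, 5}"
proof (rule PBD_of_block_list)
  show "finite (points_over 1 {0})" "card (points_over 1 {0}) = 11"
    by (simp_all add: finite_points_over card_points_over)
  show "\<forall>c\<in>set pbd11. set c \<subseteq> points_over 1 {0} \<and> card (set c) \<in> {3, 5}"
    by (simp add: pbd11_def)
  show "\<forall>x\<in>points_over 1 {0}. \<forall>y\<in>points_over 1 {0}. x \<noteq> y \<longrightarrow>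
      length (filter (\<lambda>c. x \<in> set c \<and> y \<in> set c) pbd11) = 1"
    unfolding base_points_set by code_simp
qed

interpretation inflation_89: inflation 3 2 pbd17
proof
  show "PBD (points_over 2 {0}) (set ` set pbd17) (5 + 3 * 2 ^ 2) {3, 5}" using pbd17_PBD by simp
  show "W_points \<in> set ` set pbd17" unfolding W_points_eq by (simp add: pbd17_def)
qed

interpretation inflation_95: inflation 4 1 pbd11
proof
  show "PBD (points_over 1 {0}) (set ` set pbd11) (5 + 3 * 2 ^ 1) {3, 5}" using pbd11_PBD by simp
  show "W_points \<in> set ` set pbd11" unfolding W_points_eq by (simp add: pbd11_def)
qed

text \<open>
  Four points each, with a sequence of pairs whose lines, taken through points already reached,
  cover the whole design; found by a greedy computer search.
\<close>
definition seed_89 :: "point list" where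
  "seed_89 = [G 3 0 1, G 6 2 2, G 6 1 0, G 1 2 3]"

definition seed_95 :: "point list" where
  "seed_95 = [G 10 0 1, G 5 1 0, G 8 0 1, G 11 2 0]"

definition spanning_pairs_89 :: "(point \<times> point) list" where
  "spanning_pairs_89 = [
    (G 3 0 1, G 6 2 2), (G 3 0 1, G 6 1 0), (G 3 0 1, G 1 2 3), (G 6 2 2, G 6 1 0),
    (G 3 0 1, W 4), (G 6 2 2, G 1 2 3), (G 3 0 1, G 7 2 1), (G 6 2 2, G 5 2 1),
    (G 3 0 1, G 3 2 3), (G 6 2 2, G 2 1 2), (G 3 0 1, G 4 0 0), (G 6 2 2, G 3 0 3),
    (G 3 0 1, G 5 1 1), (G 6 2 2, G 4 1 0), (G 3 0 1, G 2 0 2), (G 6 2 2, G 3 2 0),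
    (G 3 0 1, G 5 2 2), (G 6 2 2, G 7 0 1), (G 3 0 1, G 1 1 3), (G 6 2 2, G 6 2 0),
    (W 4, W 1), (G 3 0 1, W 1), (G 3 0 1, W 0), (G 3 0 1, W 2),
    (G 3 0 1, W 3), (G 6 2 2, G 1 0 3), (G 3 0 1, G 7 1 1), (G 6 2 2, G 6 1 3),
    (G 3 0 1, G 6 1 1), (G 6 2 2, W 0), (G 3 0 1, G 6 2 3), (G 6 2 2, W 2),
    (G 3 0 1, G 6 0 3), (G 6 2 2, W 3), (G 3 0 1, G 6 2 1), (G 6 2 2, G 3 1 2),
    (G 3 0 1, G 5 0 0), (G 6 2 2, G 3 1 3), (G 3 0 1, G 5 0 1), (G 6 2 2, G 5 2 0),
    (G 3 0 1, G 3 2 2), (G 6 1 0, G 1 2 3), (G 3 0 1, G 7 0 3), (G 6 2 2, G 7 0 3),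
    (G 3 0 1, G 1 1 1), (G 6 2 2, G 4 0 2), (G 3 0 1, G 2 1 0), (G 6 2 2, G 2 2 0),
    (G 3 0 1, G 4 2 2), (G 6 2 2, G 1 2 1), (G 3 0 1, G 7 2 3), (G 6 2 2, G 7 1 3),
    (G 3 0 1, G 1 0 1), (G 6 1 0, G 3 0 3), (G 3 0 1, G 5 2 3), (G 6 2 2, G 5 2 3),
    (G 3 0 1, G 3 2 1), (G 6 2 2, G 6 1 2), (G 3 0 1, G 6 0 2), (G 1 2 3, W 4),
    (G 3 0 1, G 1 0 2), (G 6 2 2, G 1 0 2), (G 3 0 1, G 7 1 0), (G 6 2 2, G 2 0 3),
    (G 3 0 1, G 4 1 1), (G 6 2 2, G 4 2 1), (G 3 0 1, G 2 2 3), (G 6 2 2, G 7 2 0),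
    (G 3 0 1, G 1 2 2), (G 6 2 2, G 1 1 2), (G 3 0 1, G 7 0 0), (G 6 1 0, G 1 0 2),
    (G 3 0 1, G 7 2 2), (G 6 2 2, G 7 2 2), (G 3 0 1, G 1 2 0), (G 6 2 2, G 4 1 3),
    (G 3 0 1, G 2 0 1), (G 6 2 2, G 2 1 1), (G 3 0 1, G 4 0 3), (G 6 2 2, G 1 0 0),
    (G 3 0 1, G 7 1 2), (G 6 2 2, G 7 0 2), (G 3 0 1, G 1 1 0)]"

definition spanning_pairs_95 :: "(point \<times> point) list" where
  "spanning_pairs_95 = [
    (G 10 0 1, G 5 1 0), (G 10 0 1, G 8 0 1), (G 10 0 1, G 11 2 0), (G 5 1 0, G 8 0 1),
    (G 10 0 1, G 13 2 1), (G 5 1 0, G 11 2 0), (G 10 0 1, G 14 0 0), (G 5 1 0, G 2 0 0),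
    (G 10 0 1, G 7 2 0), (G 5 1 0, G 1 1 1), (G 10 0 1, G 4 1 1), (G 5 1 0, G 7 1 0),
    (G 10 0 1, G 2 1 0), (G 5 1 0, G 4 0 1), (G 10 0 1, G 1 2 1), (G 5 1 0, G 13 1 1),
    (G 10 0 1, G 8 1 1), (G 5 1 0, G 14 2 0), (G 10 0 1, G 11 0 0), (G 5 1 0, G 8 2 1),
    (G 10 0 1, G 13 0 1), (G 5 1 0, G 11 1 0), (G 10 0 1, G 14 1 0), (G 8 0 1, G 11 2 0),
    (G 10 0 1, G 3 1 1), (G 5 1 0, G 3 1 1), (G 10 0 1, G 6 1 1), (G 5 1 0, G 9 2 0),
    (G 10 0 1, G 12 0 0), (G 5 1 0, G 12 2 0), (G 10 0 1, G 9 0 0), (G 5 1 0, G 6 0 1),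
    (G 10 0 1, G 3 2 1), (G 5 1 0, G 3 0 1), (G 10 0 1, G 6 2 1), (G 8 0 1, G 7 2 0),
    (G 10 0 1, G 15 1 1), (G 5 1 0, G 15 1 1), (G 10 0 1, G 10 1 1), (G 5 1 0, G 5 2 0),
    (W 1, W 4), (G 10 0 1, W 4), (G 10 0 1, W 0), (G 10 0 1, W 2),
    (G 10 0 1, W 3), (G 5 1 0, W 1), (G 10 0 1, G 5 2 1), (G 5 1 0, W 0),
    (G 10 0 1, G 5 1 1), (G 5 1 0, W 2), (G 10 0 1, G 5 0 1), (G 5 1 0, W 3),
    (G 10 0 1, G 5 0 0), (G 8 0 1, W 4), (G 10 0 1, G 8 0 0), (G 5 1 0, G 8 0 0),
    (G 10 0 1, G 13 2 0), (G 5 1 0, G 2 0 1), (G 10 0 1, G 7 2 1), (G 5 1 0, G 7 1 1),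
    (G 10 0 1, G 2 1 1), (G 5 1 0, G 13 1 0), (G 10 0 1, G 8 1 0), (G 5 1 0, G 8 2 0),
    (G 10 0 1, G 13 0 0), (G 11 2 0, W 0), (G 10 0 1, G 11 0 1), (G 5 1 0, G 11 0 1),
    (G 10 0 1, G 14 2 1), (G 5 1 0, G 1 0 0), (G 10 0 1, G 4 2 0), (G 5 1 0, G 4 1 0),
    (G 10 0 1, G 1 1 0), (G 5 1 0, G 14 1 1), (G 10 0 1, G 11 1 1), (G 5 1 0, G 11 2 1),
    (G 10 0 1, G 14 0 1), (G 8 0 1, G 11 0 1), (G 10 0 1, G 3 0 0), (G 5 1 0, G 3 0 0),
    (G 10 0 1, G 6 2 0), (G 5 1 0, G 9 0 1), (G 10 0 1, G 12 2 1), (G 5 1 0, G 12 1 1),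
    (G 10 0 1, G 9 1 1), (G 5 1 0, G 6 1 0), (G 10 0 1, G 3 1 0), (G 5 1 0, G 3 2 0),
    (G 10 0 1, G 6 0 0)]"

lemma dimension_89:
  "pbd_dimension (points_over 2 {1..<2 ^ 3}) (inflated_blocks 3 2 (set ` set pbd17)) = 3"
proof (rule inflation_89.pbd_dimension_inflation)
  have "{G 0 0 u, G 0 1 u, G 0 2 u} \<in> set ` set pbd17" if "u < 2 ^ 2" for u
  proof -
    have "u = 0 \<or> u = 1 \<or> u = 2 \<or> u = 3" using that by auto
    then show ?thesis by (elim disjE) (simp_all add: pbd17_def)
  qed
  then show "4 \<le> (3::nat) \<or> 3 \<le> (3::nat) \<and> 1 \<le> (2::nat) \<and> inflation_89.vertical_blocks"
    by (simp add: inflation_89.vertical_blocks_def)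
  show "set seed_89 \<subseteq> points_over 2 {1..<2 ^ 3}" "card (set seed_89) = 4"
    by (simp_all add: seed_89_def)
  show "points_over 2 {1..<2 ^ 3} \<subseteq> set (span_along (line pbd17) seed_89 spanning_pairs_89)"
    unfolding atLeastLessThan_upt points_over_set
    by (simp add: pbd17_def seed_89_def spanning_pairs_89_def fill_block_def upt_rec)
qed

lemma dimension_95:
  "pbd_dimension (points_over 1 {1..<2 ^ 4}) (inflated_blocks 4 1 (set ` set pbd11)) = 3"
proof (rule inflation_95.pbd_dimension_inflation)
  show "4 \<le> (4::nat) \<or> 3 \<le> (4::nat) \<and> 1 \<le> (1::nat) \<and> inflation_95.vertical_blocks" by simp
  show "set seed_95 \<subseteq> points_over 1 {1..<2 ^ 4}" "card (set seed_95) = 4"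
    by (simp_all add: seed_95_def)
  show "points_over 1 {1..<2 ^ 4} \<subseteq> set (span_along (line pbd11) seed_95 spanning_pairs_95)"
    unfolding atLeastLessThan_upt points_over_set
    by (simp add: pbd11_def seed_95_def spanning_pairs_95_def fill_block_def upt_rec)
qed

theorem proposition3p9:
  shows "\<forall>v \<in> {89, 95}. \<exists>(X :: nat set) \<B>.
           PBD X \<B> v {3, 5} \<and> pbd_dimension X \<B> = 3"
proof -
  have "PBD (points_over 2 {1..<2 ^ 3}) (inflated_blocks 3 2 (set ` set pbd17)) 89 {3, 5}"
    using inflation_89.PBD_inflation by simp
  then have "\<exists>(X :: nat set) \<B>. PBD X \<B> 89 {3, 5} \<and> pbd_dimension X \<B> = 3"
    using ex_nat_PBD dimension_89 by metis
  moreover have "PBD (points_over 1 {1..<2 ^ 4}) (inflated_blocks 4 1 (set ` set pbd11)) 95 {3, 5}"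
    using inflation_95.PBD_inflation by simp
  then have "\<exists>(X :: nat set) \<B>. PBD X \<B> 95 {3, 5} \<and> pbd_dimension X \<B> = 3"
    using ex_nat_PBD dimension_95 by metis
  ultimately show ?thesis by simp
qed

end
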